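(* Let $\mathcal{I}_1\sqcup\cdots\sqcup\mathcal{I}_K=[N]$ be a partition of the modes into nonempty cells, let $\sigma_n$ denote the index of the cell containing mode $n$, let $\tilde I_1,\dots,\tilde I_K$ be positive integers and $I_n=\tilde I_{\sigma_n}$. Let $\ell:\mathbb{R}\times\mathbb{R}\to\mathbb{R}$ be differentiable in its second argument, and let $\mathcal{X}\in\mathbb{R}^{I_1\times\cdots\times I_N}$ be symmetric with respect to the partition $\mathcal{I}_1\sqcup\cdots\sqcup\mathcal{I}_K$. Define, for $\boldsymbol{\lambda}\in\mathbb{R}^r$ and $\mathbf{A}_k\in\mathbb{R}^{\tilde I_k\times r}$, $$\mathcal{F}(\boldsymbol{\lambda},\mathbf{A}_1,\dots,\mathbf{A}_K)=\sum_{i}\ell(x_i,m_i),\qquad \mathcal{M}=\sum_{j=1}^r\lambda_j(\mathbf{A}_{\sigma_1})_{:,j}\circ\cdots\circ(\mathbf{A}_{\sigma_N})_{:,j},$$ and let $\mathcal{Y}$ have entries $y_i=\frac{\partial\ell}{\partial m}(x_i,m_i)$. Then for each $k\in[K]$ and any $k'\in\mathcal{I}_k$, $$\frac{\partial\mathcal{F}}{\partial\mathbf{A}_k} = |\mathcal{I}_k|\,\mathbf{Y}_{(k')}\Big(\textstyle\bigodot_{j\neq k'}\mathbf{A}_{\sigma_j}\Big)\operatorname{diag}(\boldsymbol{\lambda}),$$ where $\bigodot_{j\neq t}\mathbf{A}_{\sigma_j}=\mathbf{A}_{\sigma_N}\odot\cdots\odot\mathbf{A}_{\sigma_{t+1}}\odot\mathbf{A}_{\sigma_{t-1}}\odot\cdots\odot\mathbf{A}_{\sigma_1}$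 and $|\mathcal{I}_k|$ is the number of modes in $\mathcal{I}_k$.
   Context: A tensor is symmetric with respect to the partition if its entries are unchanged under every permutation of its $N$ indices that maps each cell $\mathcal{I}_\ell$ to itself, i.e. $x_{(i_{\pi(1)},\dots,i_{\pi(N)})}=x_{(i_1,\dots,i_N)}$. $\circ$ is the outer product; $\odot$ is the Khatri–Rao product ($j$-th column of $\mathbf{A}\odot\mathbf{B}$ is $\mathbf{A}_{:,j}\otimes\mathbf{B}_{:,j}$). The mode-$t$ matricization $\mathbf{Y}_{(t)}\in\mathbb{R}^{I_t\times\prod_{j\neq t}I_j}$ places $y_{i_1,\dots,i_N}$ in row $i_t$ and column $1+\sum_{k\neq t}(i_k-1)\prod_{m<k,\,m\neq t}I_m$. $\partial\mathcal{F}/\partial\mathbf{A}_k$ is the matrix of partial derivatives with the shape of $\mathbf{A}_k$. *)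

theory Defs
  imports "HOL-Analysis.Analysis" "HOL-Combinatorics.Permutations"
begin

text \<open>Conventions (0-based): modes are 0..<N, cells are 0..<K, the cell of mode n is
  sig n.  Index tuples of an N-way tensor are lists of length N; the mode sizes are
  given by a function I :: nat \<Rightarrow> nat.  Matrices are functions nat \<Rightarrow> nat \<Rightarrow> real
  (row, column), with the dimensions carried separately.\<close>

definition tidx :: "nat \<Rightarrow> (nat \<Rightarrow> nat) \<Rightarrow> nat list set" where
  "tidx N I = {is. length is = N \<and> (\<forall>n<N. is ! n < I n)}"

definition partition_symmetric ::
  "nat \<Rightarrow> (nat \<Rightarrow> nat) \<Rightarrow> (nat \<Rightarrow> nat) \<Rightarrow> (nat list \<Rightarrow> real) \<Rightarrow> bool" where
  "partition_symmetric N I sig X \<longleftrightarrow>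
     (\<forall>\<pi> is. \<pi> permutes {..<N} \<longrightarrow> (\<forall>n<N. sig (\<pi> n) = sig n) \<longrightarrow> is \<in> tidx N I \<longrightarrow>
        X (map (\<lambda>n. is ! \<pi> n) [0..<N]) = X is)"

definition cp_model ::
  "nat \<Rightarrow> nat \<Rightarrow> (nat \<Rightarrow> nat) \<Rightarrow> (nat \<Rightarrow> real) \<Rightarrow> (nat \<Rightarrow> nat \<Rightarrow> nat \<Rightarrow> real) \<Rightarrow> nat list \<Rightarrow> real" where
  "cp_model N r sig lam A is = (\<Sum>j<r. lam j * (\<Prod>n<N. A (sig n) (is ! n) j))"

definition cp_loss ::
  "(real \<Rightarrow> real \<Rightarrow> real) \<Rightarrow> nat \<Rightarrow> (nat \<Rightarrow> nat) \<Rightarrow> nat \<Rightarrow> (nat \<Rightarrow> nat) \<Rightarrow> (nat list \<Rightarrow> real)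
     \<Rightarrow> (nat \<Rightarrow> real) \<Rightarrow> (nat \<Rightarrow> nat \<Rightarrow> nat \<Rightarrow> real) \<Rightarrow> real" where
  "cp_loss ell N I r sig X lam A = (\<Sum>is\<in>tidx N I. ell (X is) (cp_model N r sig lam A is))"

text \<open>Column index of an entry in the mode-t matricization (0-based version of
  1 + sum_{k \<noteq> t} (i_k - 1) prod_{m<k, m \<noteq> t} I_m).\<close>
definition mat_col :: "nat \<Rightarrow> (nat \<Rightarrow> nat) \<Rightarrow> nat \<Rightarrow> nat list \<Rightarrow> nat" where
  "mat_col N I t is = (\<Sum>k\<in>{..<N} - {t}. (is ! k) * (\<Prod>m\<in>{..<k} - {t}. I m))"

definition matricize :: "nat \<Rightarrow> (nat \<Rightarrow> nat) \<Rightarrow> nat \<Rightarrow> (nat list \<Rightarrow> real) \<Rightarrow> nat \<Rightarrow> nat \<Rightarrow> real" where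
  "matricize N I t Y p c = Y (THE is. is \<in> tidx N I \<and> is ! t = p \<and> mat_col N I t is = c)"

text \<open>Khatri-Rao product A \<odot> B where B has IB rows: column j is A_{:,j} \<otimes> B_{:,j}.\<close>
definition khatri_rao :: "nat \<Rightarrow> (nat \<Rightarrow> nat \<Rightarrow> real) \<Rightarrow> (nat \<Rightarrow> nat \<Rightarrow> real) \<Rightarrow> nat \<Rightarrow> nat \<Rightarrow> real" where
  "khatri_rao IB A B i j = A (i div IB) j * B (i mod IB) j"

fun khatri_rao_list :: "((nat \<Rightarrow> nat \<Rightarrow> real) \<times> nat) list \<Rightarrow> nat \<Rightarrow> nat \<Rightarrow> real" where
  "khatri_rao_list [] = (\<lambda>i j. 1)"
| "khatri_rao_list ((M, _) # Ms) = khatri_rao (\<Prod>x\<leftarrow>Ms. snd x) M (khatri_rao_list Ms)"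

definition kr_except ::
  "nat \<Rightarrow> (nat \<Rightarrow> nat) \<Rightarrow> (nat \<Rightarrow> nat) \<Rightarrow> (nat \<Rightarrow> nat \<Rightarrow> nat \<Rightarrow> real) \<Rightarrow> nat \<Rightarrow> nat \<Rightarrow> nat \<Rightarrow> real" where
  "kr_except N I sig A t =
     khatri_rao_list (map (\<lambda>n. (A (sig n), I n)) (rev (filter (\<lambda>n. n \<noteq> t) [0..<N])))"

definition matmul :: "nat \<Rightarrow> (nat \<Rightarrow> nat \<Rightarrow> real) \<Rightarrow> (nat \<Rightarrow> nat \<Rightarrow> real) \<Rightarrow> nat \<Rightarrow> nat \<Rightarrow> real" where
  "matmul n P Q i j = (\<Sum>c<n. P i c * Q c j)"

definition diag_mat :: "(nat \<Rightarrow> real) \<Rightarrow> nat \<Rightarrow> nat \<Rightarrow> real" where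
  "diag_mat v i j = (if i = j then v i else 0)"

end

theory Submission
  imports Defs
begin

text \<open>By the chain rule, the partial derivative of the loss with respect to the entry (p, q)
  of A_k is lam_q times a sum over the modes n of cell k of the contraction of Y with the
  q-th columns of all factors except the n-th, over the slice i_n = p. Such a contraction is
  the (p, q) entry of Y_(n) times the Khatri-Rao product of the other factors, because the
  column index of the mode-n matricization and the row index of that Khatri-Rao product
  are the same mixed-radix numeral in the remaining indices. If X is symmetric then so is
  Y, and transposing two modes of the same cell shows that all modes of cell k contribute
  the same contraction; hence the factor |I_k|.\<close>

fun radix_code :: "(nat \<Rightarrow> nat) \<Rightarrow> nat list \<Rightarrow> (nat \<Rightarrow> nat) \<Rightarrow> nat" where
  "radix_code I [] d = 0"
| "radix_code I (n # L) d = d n * (\<Prod>m\<leftarrow>L. I m) + radix_code I L d"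

lemma radix_code_less:
  assumes "\<forall>n\<in>set L. d n < I n"
  shows "radix_code I L d < (\<Prod>m\<leftarrow>L. I m)"
  using assms
proof (induction L)
  case Nil
  then show ?case by simp
next
  case (Cons n L)
  let ?P = "\<Prod>m\<leftarrow>L. I m"
  have "radix_code I (n # L) d < d n * ?P + ?P"
    using Cons by simp
  also have "\<dots> = (d n + 1) * ?P"
    by simp
  also have "\<dots> \<le> I n * ?P"
    using Cons.prems by (intro mult_right_mono) auto
  finally show ?case by simp
qed

lemma radix_code_cong: "\<forall>n\<in>set L. d n = d' n \<Longrightarrow> radix_code I L d = radix_code I L d'"
  by (induction L) auto

lemma radix_code_Cons_div_mod:
  assumes "\<forall>m\<in>set L. d m < I m"
  shows "radix_code I (n # L) d div (\<Prod>m\<leftarrow>L. I m) = d n"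
    and "radix_code I (n # L) d mod (\<Prod>m\<leftarrow>L. I m) = radix_code I L d"
  using radix_code_less[OF assms] by simp_all

lemma radix_code_inj:
  assumes "\<forall>n\<in>set L. d n < I n" "\<forall>n\<in>set L. d' n < I n" "radix_code I L d = radix_code I L d'"
  shows "\<forall>n\<in>set L. d n = d' n"
  using assms
proof (induction L)
  case Nil
  then show ?case by simp
next
  case (Cons n L)
  then have digits: "\<forall>m\<in>set L. d m < I m" "\<forall>m\<in>set L. d' m < I m"
    by auto
  let ?P = "\<Prod>m\<leftarrow>L. I m"
  have "d n = radix_code I (n # L) d div ?P"
    by (rule radix_code_Cons_div_mod(1)[OF digits(1), symmetric])
  also have "\<dots> = radix_code I (n # L) d' div ?P"
    using Cons.prems(3) by (rule arg_cong)
  also have "\<dots> = d' n"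
    by (rule radix_code_Cons_div_mod(1)[OF digits(2)])
  finally have "d n = d' n" .
  have "radix_code I L d = radix_code I (n # L) d mod ?P"
    by (rule radix_code_Cons_div_mod(2)[OF digits(1), symmetric])
  also have "\<dots> = radix_code I (n # L) d' mod ?P"
    using Cons.prems(3) by (rule arg_cong)
  also have "\<dots> = radix_code I L d'"
    by (rule radix_code_Cons_div_mod(2)[OF digits(2)])
  finally have "\<forall>m\<in>set L. d m = d' m"
    by (rule Cons.IH[OF digits])
  with \<open>d n = d' n\<close> show ?case
    by simp
qed

lemma radix_code_surj:
  assumes "distinct L" "c < (\<Prod>m\<leftarrow>L. I m)"
  shows "\<exists>d. (\<forall>n\<in>set L. d n < I n) \<and> radix_code I L d = c"
  using assms
proof (induction L arbitrary: c)
  case Nil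
  then show ?case by simp
next
  case (Cons n L)
  let ?P = "\<Prod>m\<leftarrow>L. I m"
  have "?P > 0"
    using Cons.prems by (auto intro: Nat.gr0I)
  then obtain d where d: "\<forall>m\<in>set L. d m < I m" "radix_code I L d = c mod ?P"
    using Cons.IH[of "c mod ?P"] Cons.prems by auto
  have "c div ?P < I n"
    using Cons.prems by (simp add: less_mult_imp_div_less mult.commute)
  moreover have "radix_code I L (d(n := c div ?P)) = radix_code I L d"
    using Cons.prems by (intro radix_code_cong) auto
  ultimately have "(\<forall>m\<in>set (n # L). (d(n := c div ?P)) m < I m) \<and>
      radix_code I (n # L) (d(n := c div ?P)) = c"
    using d by simp
  then show ?case by blast
qed

lemma khatri_rao_list_radix_code:
  assumes "\<forall>n\<in>set L. d n < I n"
  shows "khatri_rao_list (map (\<lambda>n. (B n, I n)) L) (radix_code I L d) j = (\<Prod>n\<leftarrow>L. B n (d n) j)"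
  using assms
proof (induction L)
  case Nil
  then show ?case by simp
next
  case (Cons n L)
  have "(\<Prod>x\<leftarrow>map (\<lambda>n. (B n, I n)) L. snd x) = (\<Prod>m\<leftarrow>L. I m)"
    by (simp add: o_def)
  then show ?case
    using Cons radix_code_Cons_div_mod[of L d I n] by (simp add: khatri_rao_def)
qed

lemma prod_list_modes_except:
  "(\<Prod>m\<leftarrow>rev (filter (\<lambda>n. n \<noteq> t) [0..<N]). f m) = (\<Prod>m\<in>{..<N} - {t}. f m)"
proof -
  have "(\<Prod>m\<in>set (filter (\<lambda>n. n \<noteq> t) [0..<N]). f m) =
      (\<Prod>m\<leftarrow>filter (\<lambda>n. n \<noteq> t) [0..<N]. f m)"
    by (rule prod.distinct_set_conv_list) simp
  moreover have "set (filter (\<lambda>n. n \<noteq> t) [0..<N]) = {..<N} - {t}"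
    by auto
  ultimately show ?thesis
    by (simp add: rev_map[symmetric])
qed

lemma mat_col_eq_radix_code:
  "mat_col N I t is = radix_code I (rev (filter (\<lambda>n. n \<noteq> t) [0..<N])) (\<lambda>n. is ! n)"
proof (induction N)
  case 0
  then show ?case by (simp add: mat_col_def)
next
  case (Suc N)
  show ?case
  proof (cases "N = t")
    case True
    then have "{..<Suc N} - {t} = {..<N} - {t}"
      by auto
    then show ?thesis
      using Suc True by (simp add: mat_col_def)
  next
    case False
    then have "{..<Suc N} - {t} = insert N ({..<N} - {t})"
      by auto
    then show ?thesis
      using Suc False by (simp add: mat_col_def prod_list_modes_except)
  qed
qed

lemma mat_col_bij_betw:
  assumes "t < N" "p < I t"
  shows "bij_betw (mat_col N I t) {is \<in> tidx N I. is ! t = p} {..<\<Prod>j\<in>{..<N} - {t}. I j}"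
proof -
  define L where "L = rev (filter (\<lambda>n. n \<noteq> t) [0..<N])"
  have set_L: "set L = {..<N} - {t}" and "distinct L"
    unfolding L_def by auto
  have codes: "mat_col N I t xs = radix_code I L (\<lambda>n. xs ! n)" for xs
    unfolding L_def by (rule mat_col_eq_radix_code)
  have size: "(\<Prod>j\<in>{..<N} - {t}. I j) = (\<Prod>m\<leftarrow>L. I m)"
    unfolding L_def by (rule prod_list_modes_except[symmetric])
  have digits: "\<forall>n\<in>set L. xs ! n < I n" if "xs \<in> tidx N I" for xs
    using that set_L by (auto simp: tidx_def)
  show ?thesis
  proof (rule bij_betw_imageI)
    show "inj_on (mat_col N I t) {is \<in> tidx N I. is ! t = p}"
    proof (rule inj_onI)
      fix xs ys
      assume xs: "xs \<in> {is \<in> tidx N I. is ! t = p}" and ys: "ys \<in> {is \<in> tidx N I. is ! t = p}"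
        and "mat_col N I t xs = mat_col N I t ys"
      then have "\<forall>n\<in>set L. xs ! n = ys ! n"
        using radix_code_inj[OF digits digits] by (simp add: codes)
      moreover have "length xs = N" "length ys = N" "xs ! t = ys ! t"
        using xs ys by (auto simp: tidx_def)
      ultimately show "xs = ys"
        using set_L by (intro nth_equalityI) (simp, metis Diff_iff lessThan_iff singletonD)
    qed
    show "mat_col N I t ` {is \<in> tidx N I. is ! t = p} = {..<\<Prod>j\<in>{..<N} - {t}. I j}"
    proof (intro equalityI subsetI)
      fix c
      assume "c \<in> mat_col N I t ` {is \<in> tidx N I. is ! t = p}"
      then obtain xs where "xs \<in> tidx N I" "c = radix_code I L (\<lambda>n. xs ! n)"
        by (auto simp: codes)
      then show "c \<in> {..<\<Prod>j\<in>{..<N} - {t}. I j}"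
        using radix_code_less[OF digits] by (simp add: size)
    next
      fix c
      assume "c \<in> {..<\<Prod>j\<in>{..<N} - {t}. I j}"
      then obtain d where d: "\<forall>n\<in>set L. d n < I n" "radix_code I L d = c"
        using radix_code_surj[OF \<open>distinct L\<close>] size by auto
      define xs where "xs = map (\<lambda>n. if n = t then p else d n) [0..<N]"
      have "xs \<in> {is \<in> tidx N I. is ! t = p}"
        using d(1) set_L assms by (auto simp: xs_def tidx_def)
      moreover have "mat_col N I t xs = c"
        unfolding codes d(2)[symmetric] using set_L by (intro radix_code_cong) (auto simp: xs_def)
      ultimately show "c \<in> mat_col N I t ` {is \<in> tidx N I. is ! t = p}"
        by blast
    qed
  qed
qed

lemma matricize_mat_col:
  assumes "t < N" "p < I t" "is \<in> tidx N I" "is ! t = p"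
  shows "matricize N I t Y p (mat_col N I t is) = Y is"
proof -
  have "(THE js. js \<in> tidx N I \<and> js ! t = p \<and> mat_col N I t js = mat_col N I t is) = is"
    using bij_betw_imp_inj_on[OF mat_col_bij_betw[of t N p I, OF assms(1,2)]] assms(3,4)
    by (intro the_equality) (auto dest: inj_onD)
  then show ?thesis
    unfolding matricize_def by simp
qed

lemma kr_except_mat_col:
  assumes "is \<in> tidx N I"
  shows "kr_except N I sig A t (mat_col N I t is) j = (\<Prod>m\<in>{..<N} - {t}. A (sig m) (is ! m) j)"
proof -
  have "\<forall>n\<in>set (rev (filter (\<lambda>n. n \<noteq> t) [0..<N])). is ! n < I n"
    using assms by (auto simp: tidx_def)
  then show ?thesis
    by (simp add: kr_except_def mat_col_eq_radix_code khatri_rao_list_radix_code prod_list_modes_except)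
qed

definition slice_contraction ::
  "nat \<Rightarrow> (nat \<Rightarrow> nat) \<Rightarrow> (nat \<Rightarrow> nat) \<Rightarrow> (nat \<Rightarrow> nat \<Rightarrow> nat \<Rightarrow> real) \<Rightarrow> (nat list \<Rightarrow> real)
     \<Rightarrow> nat \<Rightarrow> nat \<Rightarrow> nat \<Rightarrow> real" where
  "slice_contraction N I sig A Y t p q =
     (\<Sum>is | is \<in> tidx N I \<and> is ! t = p. Y is * (\<Prod>m\<in>{..<N} - {t}. A (sig m) (is ! m) q))"

lemma matmul_matricize_kr_except:
  assumes "t < N" "p < I t"
  shows "matmul (\<Prod>j\<in>{..<N} - {t}. I j) (matricize N I t Y) (kr_except N I sig A t) p q =
    slice_contraction N I sig A Y t p q"
proof -
  have "matmul (\<Prod>j\<in>{..<N} - {t}. I j) (matricize N I t Y) (kr_except N I sig A t) p q =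
    (\<Sum>is | is \<in> tidx N I \<and> is ! t = p.
       matricize N I t Y p (mat_col N I t is) * kr_except N I sig A t (mat_col N I t is) q)"
    unfolding matmul_def
    by (rule sum.reindex_bij_betw[OF mat_col_bij_betw[of t N p I, OF assms], symmetric])
  also have "\<dots> = slice_contraction N I sig A Y t p q"
    unfolding slice_contraction_def
    using assms by (intro sum.cong refl) (simp add: matricize_mat_col kr_except_mat_col)
  finally show ?thesis .
qed

lemma matmul_diag_mat: "q < r \<Longrightarrow> matmul r P (diag_mat v) p q = P p q * v q"
  by (simp add: matmul_def diag_mat_def if_distrib[of "(*) _"] cong: if_cong)

lemma cp_model_has_real_derivative:
  assumes "q < r"
  shows "((\<lambda>t. cp_model N r sig lam (A(k := (A k)(p := (A k p)(q := t)))) is) has_real_derivative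
     lam q * (\<Sum>n | n < N \<and> sig n = k \<and> is ! n = p. \<Prod>m\<in>{..<N} - {n}. A (sig m) (is ! m) q))
     (at (A k p q))"
proof -
  define hit where "hit j n \<longleftrightarrow> sig n = k \<and> is ! n = p \<and> j = q" for j n
  define f where "f j n t = (if hit j n then t else A (sig n) (is ! n) j)" for j n and t :: real
  have model: "cp_model N r sig lam (A(k := (A k)(p := (A k p)(q := t)))) is =
      (\<Sum>j<r. lam j * (\<Prod>n<N. f j n t))" for t
    unfolding cp_model_def f_def hit_def
    by (intro sum.cong prod.cong arg_cong2[where f = "(*)"] refl) auto
  have f_at: "f j n (A k p q) = A (sig n) (is ! n) j" for j n
    unfolding f_def hit_def by auto
  have "(f j n has_real_derivative (if hit j n then 1 else 0)) (at t)" for j n t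
    unfolding f_def by (cases "hit j n") (auto intro!: derivative_eq_intros)
  then have "((\<lambda>t. \<Sum>j<r. lam j * (\<Prod>n<N. f j n t)) has_real_derivative
     (\<Sum>j<r. lam j * (\<Sum>n<N. (if hit j n then 1 else 0) * (\<Prod>m\<in>{..<N} - {n}. f j m (A k p q)))))
     (at (A k p q))"
    by (intro DERIV_sum DERIV_cmult has_field_derivative_prod)
  also have "(\<Sum>j<r. lam j * (\<Sum>n<N. (if hit j n then 1 else 0) * (\<Prod>m\<in>{..<N} - {n}. f j m (A k p q)))) =
      (\<Sum>j<r. if j = q
        then lam q * (\<Sum>n<N. if hit q n then \<Prod>m\<in>{..<N} - {n}. A (sig m) (is ! m) q else 0)
        else 0)"
    by (intro sum.cong refl) (auto simp: hit_def f_at intro!: sum.cong)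
  also have "\<dots> = lam q * (\<Sum>n<N. if hit q n then \<Prod>m\<in>{..<N} - {n}. A (sig m) (is ! m) q else 0)"
    using assms by simp
  also have "\<dots> = lam q * (\<Sum>n | n < N \<and> sig n = k \<and> is ! n = p. \<Prod>m\<in>{..<N} - {n}. A (sig m) (is ! m) q)"
    by (simp add: hit_def sum.inter_filter[symmetric] lessThan_def)
  finally show ?thesis
    unfolding model .
qed

lemma finite_tidx: "finite (tidx N I)"
proof -
  have "xs ! n < (\<Sum>n<N. I n)" if "xs \<in> tidx N I" "n < N" for xs n
    using that member_le_sum[of n "{..<N}" I] by (fastforce simp: tidx_def)
  then have "tidx N I \<subseteq> {xs. set xs \<subseteq> {..<\<Sum>n<N. I n} \<and> length xs = N}"
    by (auto simp: tidx_def in_set_conv_nth)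
  then show ?thesis
    by (rule finite_subset) (simp add: finite_lists_length_eq)
qed

lemma cp_loss_has_real_derivative:
  assumes ell_diff: "\<And>x m. ell x differentiable (at m)" and "q < r"
  shows "((\<lambda>t. cp_loss ell N I r sig X lam (A(k := (A k)(p := (A k p)(q := t))))) has_real_derivative
     lam q * (\<Sum>n | n < N \<and> sig n = k.
       slice_contraction N I sig A (\<lambda>is. deriv (ell (X is)) (cp_model N r sig lam A is)) n p q))
     (at (A k p q))"
proof -
  define y where "y xs = deriv (ell (X xs)) (cp_model N r sig lam A xs)" for xs
  define P where "P n xs = (\<Prod>m\<in>{..<N} - {n}. A (sig m) (xs ! m) q)" for n xs
  have "((\<lambda>t. cp_loss ell N I r sig X lam (A(k := (A k)(p := (A k p)(q := t))))) has_real_derivative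
     (\<Sum>xs\<in>tidx N I. y xs * (lam q * (\<Sum>n | n < N \<and> sig n = k \<and> xs ! n = p. P n xs)))) (at (A k p q))"
    unfolding cp_loss_def
  proof (rule DERIV_sum)
    fix xs
    have "A(k := (A k)(p := (A k p)(q := A k p q))) = A"
      by simp
    then have "(ell (X xs) has_real_derivative y xs)
        (at (cp_model N r sig lam (A(k := (A k)(p := (A k p)(q := A k p q)))) xs))"
      unfolding y_def using ell_diff by (simp add: DERIV_deriv_iff_real_differentiable)
    then show "((\<lambda>t. ell (X xs) (cp_model N r sig lam (A(k := (A k)(p := (A k p)(q := t)))) xs))
        has_real_derivative y xs * (lam q * (\<Sum>n | n < N \<and> sig n = k \<and> xs ! n = p. P n xs))) (at (A k p q))"
      unfolding P_def
      by (rule DERIV_chain2[OF _ cp_model_has_real_derivative[OF \<open>q < r\<close>]])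
  qed
  also have "(\<Sum>xs\<in>tidx N I. y xs * (lam q * (\<Sum>n | n < N \<and> sig n = k \<and> xs ! n = p. P n xs))) =
      lam q * (\<Sum>xs\<in>tidx N I. \<Sum>n\<in>{n \<in> {n. n < N \<and> sig n = k}. xs ! n = p}. y xs * P n xs)"
    by (simp add: sum_distrib_left mult_ac)
  also have "\<dots> = lam q * (\<Sum>n | n < N \<and> sig n = k. \<Sum>xs\<in>{xs \<in> tidx N I. xs ! n = p}. y xs * P n xs)"
    by (subst sum.swap_restrict) (simp_all add: finite_tidx)
  finally show ?thesis
    by (simp only: slice_contraction_def y_def P_def)
qed

lemma cp_model_permute:
  assumes "\<pi> permutes {..<N}" "\<forall>n<N. sig (\<pi> n) = sig n" "length xs = N"
  shows "cp_model N r sig lam A (map (\<lambda>n. xs ! \<pi> n) [0..<N]) = cp_model N r sig lam A xs"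
  unfolding cp_model_def
proof (intro sum.cong arg_cong2[where f = "(*)"] refl)
  fix j
  have "(\<Prod>n<N. A (sig n) (map (\<lambda>n. xs ! \<pi> n) [0..<N] ! n) j) = (\<Prod>n<N. A (sig (\<pi> n)) (xs ! \<pi> n) j)"
    using assms(2) by (intro prod.cong refl) auto
  also have "\<dots> = (\<Prod>n<N. A (sig n) (xs ! n) j)"
    using prod.permute[OF assms(1), of "\<lambda>n. A (sig n) (xs ! n) j"] by (simp add: o_def)
  finally show "(\<Prod>n<N. A (sig n) (map (\<lambda>n. xs ! \<pi> n) [0..<N] ! n) j) =
      (\<Prod>n<N. A (sig n) (xs ! n) j)" .
qed

lemma partition_symmetric_cp_model:
  assumes "partition_symmetric N I sig X"
  shows "partition_symmetric N I sig (\<lambda>is. g (X is) (cp_model N r sig lam A is))"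
  using assms by (simp add: partition_symmetric_def tidx_def cp_model_permute)

lemma slice_contraction_same_cell:
  assumes Y_sym: "partition_symmetric N I sig Y"
    and cell_sizes: "\<And>m n. sig m = sig n \<Longrightarrow> I m = I n"
    and "n < N" "t < N" "sig n = sig t"
  shows "slice_contraction N I sig A Y n p q = slice_contraction N I sig A Y t p q"
proof -
  define \<pi> where "\<pi> = Transposition.transpose n t"
  define h where "h xs = map (\<lambda>m. xs ! \<pi> m) [0..<N]" for xs :: "nat list"
  have \<pi>_permutes: "\<pi> permutes {..<N}"
    unfolding \<pi>_def using assms(3,4) by (intro permutes_swap_id) auto
  have \<pi>_sig: "sig (\<pi> m) = sig m" for m
    unfolding \<pi>_def using assms(5) by (cases "m = n"; cases "m = t") auto
  have \<pi>_less: "\<pi> m < N" if "m < N" for m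
    using permutes_in_image[OF \<pi>_permutes] that by simp
  have \<pi>_\<pi>: "\<pi> (\<pi> m) = m" for m
    unfolding \<pi>_def by simp
  have h_h: "h (h xs) = xs" if "length xs = N" for xs
    using that by (intro nth_equalityI) (auto simp: h_def \<pi>_less \<pi>_\<pi>)
  have h_tidx: "h xs \<in> tidx N I" if "xs \<in> tidx N I" for xs
    using that by (auto simp: h_def tidx_def) (metis \<pi>_less \<pi>_sig cell_sizes)
  have bij: "bij_betw \<pi> ({..<N} - {t}) ({..<N} - {n})"
    using permutes_imp_bij[OF \<pi>_permutes]
    by (rule bij_betw_DiffI) (use assms(3,4) in \<open>auto simp: \<pi>_def\<close>)
  have h_prod: "(\<Prod>m\<in>{..<N} - {t}. A (sig m) (h xs ! m) q) =
      (\<Prod>m\<in>{..<N} - {n}. A (sig m) (xs ! m) q)" for xs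
  proof -
    have "(\<Prod>m\<in>{..<N} - {t}. A (sig m) (h xs ! m) q) =
        (\<Prod>m\<in>{..<N} - {t}. A (sig (\<pi> m)) (xs ! \<pi> m) q)"
      by (intro prod.cong refl) (auto simp: h_def \<pi>_sig)
    also have "\<dots> = (\<Prod>m\<in>{..<N} - {n}. A (sig m) (xs ! m) q)"
      by (rule prod.reindex_bij_betw[OF bij])
    finally show ?thesis .
  qed
  show ?thesis
    unfolding slice_contraction_def
  proof (rule sum.reindex_bij_witness[where i = h and j = h])
    fix xs
    assume xs: "xs \<in> {is. is \<in> tidx N I \<and> is ! n = p}"
    then show "h (h xs) = xs"
      by (intro h_h) (simp add: tidx_def)
    show "h xs \<in> {is. is \<in> tidx N I \<and> is ! t = p}"
      using xs h_tidx assms(4) by (auto simp: h_def \<pi>_def)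
    have "Y (h xs) = Y xs"
      using Y_sym[unfolded partition_symmetric_def, rule_format, OF \<pi>_permutes] \<pi>_sig xs
      unfolding h_def by simp
    then show "Y (h xs) * (\<Prod>m\<in>{..<N} - {t}. A (sig m) (h xs ! m) q) =
        Y xs * (\<Prod>m\<in>{..<N} - {n}. A (sig m) (xs ! m) q)"
      by (simp add: h_prod)
  next
    fix xs
    assume xs: "xs \<in> {is. is \<in> tidx N I \<and> is ! t = p}"
    then show "h (h xs) = xs"
      by (intro h_h) (simp add: tidx_def)
    show "h xs \<in> {is. is \<in> tidx N I \<and> is ! n = p}"
      using xs h_tidx assms(3) by (auto simp: h_def \<pi>_def)
  qed
qed

theorem corollary1:
  fixes N K r :: nat
    and sig :: "nat \<Rightarrow> nat" and It :: "nat \<Rightarrow> nat" and I :: "nat \<Rightarrow> nat"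
    and ell :: "real \<Rightarrow> real \<Rightarrow> real"
    and X :: "nat list \<Rightarrow> real"
    and lam :: "nat \<Rightarrow> real"
    and A :: "nat \<Rightarrow> nat \<Rightarrow> nat \<Rightarrow> real"
    and k k' p q :: nat
  assumes sig_range: "\<forall>n<N. sig n < K"
    and cells_nonempty: "\<forall>c<K. \<exists>n<N. sig n = c"
    and It_pos: "\<forall>c<K. 0 < It c"
    and I_def: "\<forall>n. I n = It (sig n)"
    and ell_diff: "\<forall>x m. (\<lambda>m. ell x m) differentiable (at m)"
    and X_sym: "partition_symmetric N I sig X"
    and k_lt: "k < K"
    and k'_in: "k' < N" "sig k' = k"
    and p_lt: "p < It k" and q_lt: "q < r"
  shows "((\<lambda>t. cp_loss ell N I r sig X lam (A(k := (A k)(p := (A k p)(q := t)))))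
          has_real_derivative
            (real (card {n. n < N \<and> sig n = k}) *
             matmul r
               (matmul (\<Prod>j\<in>{..<N} - {k'}. I j)
                  (matricize N I k' (\<lambda>is. deriv (ell (X is)) (cp_model N r sig lam A is)))
                  (kr_except N I sig A k'))
               (diag_mat lam) p q))
         (at (A k p q))"
proof -
  \<comment> \<open>Only the symmetry of X and the cell-wise mode sizes matter.\<close>
  let ?y = "\<lambda>is. deriv (ell (X is)) (cp_model N r sig lam A is)"
  let ?G = "slice_contraction N I sig A ?y k' p q"
  have cell_sizes: "\<And>m n. sig m = sig n \<Longrightarrow> I m = I n"
    using I_def by simp
  have "partition_symmetric N I sig ?y"
    using X_sym by (rule partition_symmetric_cp_model)
  then have "(\<Sum>n | n < N \<and> sig n = k. slice_contraction N I sig A ?y n p q) =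
      real (card {n. n < N \<and> sig n = k}) * ?G"
    using slice_contraction_same_cell[OF _ cell_sizes _ k'_in(1)] k'_in(2) by simp
  moreover have "p < I k'"
    using p_lt I_def k'_in by simp
  then have "matmul r (matmul (\<Prod>j\<in>{..<N} - {k'}. I j) (matricize N I k' ?y) (kr_except N I sig A k'))
      (diag_mat lam) p q = ?G * lam q"
    using q_lt by (simp add: matmul_diag_mat matmul_matricize_kr_except k'_in(1))
  moreover have "((\<lambda>t. cp_loss ell N I r sig X lam (A(k := (A k)(p := (A k p)(q := t))))) has_real_derivative
      lam q * (\<Sum>n | n < N \<and> sig n = k. slice_contraction N I sig A ?y n p q)) (at (A k p q))"
    using ell_diff q_lt by (intro cp_loss_has_real_derivative) auto
  ultimately show ?thesis
    by (simp add: mult_ac)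
qed

end
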